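(* Let $X$ be an (absolutely) continuous nonnegative integrable random variable, let $H$ be a horizon with mean $\mu:=\mathbb{E}H$, and let $p>0$ be such that $\mathbb{P}(X\ge p)=1/\mu$. Then \[\mathbb{E}M_H\le\mathbb{E}(X\mid X\ge p),\] where $M_H:=\max_{i\le H}X_i$ and $X_1,X_2,\dots$ are i.i.d. copies of $X$ independent of $H$.
   Context: A horizon is a random variable supported on a subset of $\mathbb{N}=\{1,2,\dots\}$ with finite expectation. *)

theory Defs
  imports "HOL-Probability.Probability"
begin

definition cond_exp_event :: "'a measure \<Rightarrow> ('a \<Rightarrow> real) \<Rightarrow> 'a set \<Rightarrow> real" where
  "cond_exp_event M X A = (\<integral>\<omega>. X \<omega> * indicator A \<omega> \<partial>M) / measure M A"

definition horizon :: "'a measure \<Rightarrow> ('a \<Rightarrow> nat) \<Rightarrow> bool" where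
  "horizon M H \<longleftrightarrow> H \<in> measurable M (count_space UNIV)
      \<and> (AE \<omega> in M. H \<omega> \<ge> 1)
      \<and> integrable M (\<lambda>\<omega>. real (H \<omega>))"

end

theory Submission
  imports Defs
begin

(* Bound the maximum of X\<^sub>1, ..., X\<^sub>H by p plus the sum of the excesses max(X\<^sub>i - p, 0).
  With e = E max(X - p, 0) and \<mu> = E H, Wald's identity gives E M\<^sub>H \<le> p + \<mu> e. On the other hand
  E(X 1\<^sub>{X \<ge> p}) = e + p P(X \<ge> p), so the choice P(X \<ge> p) = 1/\<mu> makes E(X | X \<ge> p) = p + \<mu> e. *)

lemma Max_le_add_sum_pos_part:
  fixes f :: "'b \<Rightarrow> real"
  assumes "finite A" "A \<noteq> {}"
  shows "Max (f ` A) \<le> c + (\<Sum>i\<in>A. max (f i - c) 0)"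
proof -
  have "Max (f ` A) \<in> f ` A"
    using assms by (intro Max_in) auto
  then obtain k where k: "k \<in> A" "Max (f ` A) = f k"
    by auto
  have "max (f k - c) 0 \<le> (\<Sum>i\<in>A. max (f i - c) 0)"
    by (rule member_le_sum) (use k assms in auto)
  then show ?thesis using k by linarith
qed

lemma suminf_of_bool_le_eq_sum:
  fixes g :: "nat \<Rightarrow> ennreal"
  shows "(\<Sum>j. of_bool (Suc j \<le> n) * g (Suc j)) = (\<Sum>i\<in>{1..n}. g i)"
proof -
  have "(\<Sum>j. of_bool (Suc j \<le> n) * g (Suc j)) = (\<Sum>j<n. of_bool (Suc j \<le> n) * g (Suc j))"
    by (rule suminf_finite) auto
  also have "\<dots> = (\<Sum>j<n. g (Suc j))"
    by (rule sum.cong) auto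
  finally show ?thesis
    by (simp add: sum.atLeast1_atMost_eq)
qed

lemma (in prob_space) nn_integral_random_sum:
  fixes Y :: "nat \<Rightarrow> 'a \<Rightarrow> real" and N :: "'a \<Rightarrow> nat" and f :: "real \<Rightarrow> ennreal"
  assumes indep: "indep_vars (\<lambda>_. borel) (\<lambda>j \<omega>. case j of None \<Rightarrow> real (N \<omega>) | Some i \<Rightarrow> Y i \<omega>) UNIV"
    and [measurable]: "N \<in> measurable M (count_space UNIV)" "\<And>i. Y i \<in> borel_measurable M"
      "f \<in> borel_measurable borel"
    and same: "\<And>i. (\<integral>\<^sup>+\<omega>. f (Y i \<omega>) \<partial>M) = c"
  shows "(\<integral>\<^sup>+\<omega>. (\<Sum>i\<in>{1..N \<omega>}. f (Y i \<omega>)) \<partial>M) = c * (\<integral>\<^sup>+\<omega>. of_nat (N \<omega>) \<partial>M)"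
proof -
  define T where "T j \<omega> = (of_bool (Suc j \<le> N \<omega>) :: ennreal)" for j \<omega>
  have [measurable]: "T j \<in> borel_measurable M" for j
    unfolding T_def by measurable
  have factor: "(\<integral>\<^sup>+\<omega>. T j \<omega> * f (Y (Suc j) \<omega>) \<partial>M) = (\<integral>\<^sup>+\<omega>. T j \<omega> \<partial>M) * c" for j
  proof -
    define g where "g k x = (case k of None \<Rightarrow> of_bool (real (Suc j) \<le> x) | Some i \<Rightarrow> f x)"
      for k :: "nat option" and x :: real
    have "g k \<in> borel_measurable borel" for k
      unfolding g_def by (cases k) auto
    then have "indep_vars (\<lambda>_. borel)
        (\<lambda>k \<omega>. g k (case k of None \<Rightarrow> real (N \<omega>) | Some i \<Rightarrow> Y i \<omega>)) {None, Some (Suc j)}"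
      by (intro indep_vars_compose2[OF indep_vars_subset[OF indep]]) auto
    from indep_vars_nn_integral[OF _ this] show ?thesis
      using same[of "Suc j"] by (simp add: g_def T_def del: of_nat_Suc)
  qed
  have "(\<integral>\<^sup>+\<omega>. (\<Sum>i\<in>{1..N \<omega>}. f (Y i \<omega>)) \<partial>M) = (\<integral>\<^sup>+\<omega>. (\<Sum>j. T j \<omega> * f (Y (Suc j) \<omega>)) \<partial>M)"
    using suminf_of_bool_le_eq_sum[of "N _" "\<lambda>i. f (Y i _)"] by (simp add: T_def)
  also have "\<dots> = (\<Sum>j. \<integral>\<^sup>+\<omega>. T j \<omega> * f (Y (Suc j) \<omega>) \<partial>M)"
    by (rule nn_integral_suminf) auto
  also have "\<dots> = (\<Sum>j. \<integral>\<^sup>+\<omega>. T j \<omega> \<partial>M) * c"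
    by (simp add: factor)
  also have "(\<Sum>j. \<integral>\<^sup>+\<omega>. T j \<omega> \<partial>M) = (\<integral>\<^sup>+\<omega>. (\<Sum>j. T j \<omega>) \<partial>M)"
    by (rule nn_integral_suminf[symmetric]) auto
  also have "\<dots> = (\<integral>\<^sup>+\<omega>. of_nat (N \<omega>) \<partial>M)"
    using suminf_of_bool_le_eq_sum[of _ "\<lambda>_. 1"] by (simp add: T_def)
  finally show ?thesis
    by (simp add: mult.commute)
qed

lemma nn_integral_comp_distr_eq:
  fixes X Y :: "'a \<Rightarrow> real" and f :: "real \<Rightarrow> ennreal"
  assumes "X \<in> borel_measurable M" "Y \<in> borel_measurable M" "distr M borel Y = distr M borel X"
    and "f \<in> borel_measurable borel"
  shows "(\<integral>\<^sup>+\<omega>. f (Y \<omega>) \<partial>M) = (\<integral>\<^sup>+\<omega>. f (X \<omega>) \<partial>M)"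
  using assms nn_integral_distr[of X M borel f] nn_integral_distr[of Y M borel f] by simp

lemma (in prob_space) integral_Max_random_le:
  fixes Y :: "nat \<Rightarrow> 'a \<Rightarrow> real" and N :: "'a \<Rightarrow> nat"
  assumes indep: "indep_vars (\<lambda>_. borel) (\<lambda>j \<omega>. case j of None \<Rightarrow> real (N \<omega>) | Some i \<Rightarrow> Y i \<omega>) UNIV"
    and [measurable]: "N \<in> measurable M (count_space UNIV)" "\<And>i. Y i \<in> borel_measurable M"
    and N_pos: "AE \<omega> in M. N \<omega> \<ge> 1" and N_int: "integrable M (\<lambda>\<omega>. real (N \<omega>))"
    and excess: "\<And>i. (\<integral>\<^sup>+\<omega>. max (Y i \<omega> - p) 0 \<partial>M) = ennreal e"
    and "0 \<le> p" "0 \<le> e"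
  shows "(\<integral>\<omega>. Max ((\<lambda>i. Y i \<omega>) ` {1..N \<omega>}) \<partial>M) \<le> p + e * (\<integral>\<omega>. real (N \<omega>) \<partial>M)"
proof (rule integral_real_bounded)
  define S where "S \<omega> = (\<Sum>i\<in>{1..N \<omega>}. max (Y i \<omega> - p) 0)" for \<omega>
  have S_nonneg: "0 \<le> S \<omega>" for \<omega>
    unfolding S_def by (rule sum_nonneg) auto
  have [measurable]: "S \<in> borel_measurable M"
    unfolding S_def by (rule measurable_compose_countable[where g=N]) auto
  have "(\<integral>\<^sup>+\<omega>. S \<omega> \<partial>M) = (\<integral>\<^sup>+\<omega>. (\<Sum>i\<in>{1..N \<omega>}. ennreal (max (Y i \<omega> - p) 0)) \<partial>M)"
    unfolding S_def by (intro nn_integral_cong, subst sum_ennreal) auto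
  also have "\<dots> = ennreal e * (\<integral>\<^sup>+\<omega>. of_nat (N \<omega>) \<partial>M)"
    by (rule nn_integral_random_sum[where f="\<lambda>x. ennreal (max (x - p) 0)", OF indep _ _ _ excess])
      auto
  also have "(\<integral>\<^sup>+\<omega>. of_nat (N \<omega>) \<partial>M) = ennreal (\<integral>\<omega>. real (N \<omega>) \<partial>M)"
    by (subst nn_integral_eq_integral[OF N_int, symmetric])
      (auto simp: ennreal_of_nat_eq_real_of_nat)
  finally have S_integral: "(\<integral>\<^sup>+\<omega>. S \<omega> \<partial>M) = ennreal (e * (\<integral>\<omega>. real (N \<omega>) \<partial>M))"
    using \<open>0 \<le> e\<close> by (simp add: ennreal_mult)
  have "(\<integral>\<^sup>+\<omega>. Max ((\<lambda>i. Y i \<omega>) ` {1..N \<omega>}) \<partial>M) \<le> (\<integral>\<^sup>+\<omega>. ennreal p + ennreal (S \<omega>) \<partial>M)"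
  proof (rule nn_integral_mono_AE)
    show "AE \<omega> in M. ennreal (Max ((\<lambda>i. Y i \<omega>) ` {1..N \<omega>})) \<le> ennreal p + ennreal (S \<omega>)"
      using N_pos
    proof eventually_elim
      case (elim \<omega>)
      then have "Max ((\<lambda>i. Y i \<omega>) ` {1..N \<omega>}) \<le> p + S \<omega>"
        unfolding S_def by (intro Max_le_add_sum_pos_part) auto
      then show ?case
        using \<open>0 \<le> p\<close> S_nonneg[of \<omega>] by (simp add: ennreal_leI flip: ennreal_plus)
    qed
  qed
  also have "\<dots> = ennreal (p + e * (\<integral>\<omega>. real (N \<omega>) \<partial>M))"
    using \<open>0 \<le> p\<close> \<open>0 \<le> e\<close> integral_nonneg_AE[of "\<lambda>\<omega>. real (N \<omega>)" M]
    by (simp add: nn_integral_add S_integral emeasure_space_1 flip: ennreal_plus)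
  finally show "(\<integral>\<^sup>+\<omega>. Max ((\<lambda>i. Y i \<omega>) ` {1..N \<omega>}) \<partial>M)
      \<le> ennreal (p + e * (\<integral>\<omega>. real (N \<omega>) \<partial>M))" .
  show "0 \<le> p + e * (\<integral>\<omega>. real (N \<omega>) \<partial>M)"
    using \<open>0 \<le> p\<close> \<open>0 \<le> e\<close> by simp
qed

lemma (in finite_measure) cond_exp_event_ge_eq:
  fixes X :: "'a \<Rightarrow> real"
  assumes [measurable]: "X \<in> borel_measurable M" and "integrable M X"
  shows "cond_exp_event M X {\<omega> \<in> space M. X \<omega> \<ge> p}
    = ((\<integral>\<omega>. max (X \<omega> - p) 0 \<partial>M) + p * measure M {\<omega> \<in> space M. X \<omega> \<ge> p})
      / measure M {\<omega> \<in> space M. X \<omega> \<ge> p}"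
proof -
  define A where "A = {\<omega> \<in> space M. X \<omega> \<ge> p}"
  have [measurable]: "A \<in> sets M"
    unfolding A_def by measurable
  have "(\<integral>\<omega>. X \<omega> * indicator A \<omega> \<partial>M) = (\<integral>\<omega>. max (X \<omega> - p) 0 + p * indicator A \<omega> \<partial>M)"
    by (intro Bochner_Integration.integral_cong) (auto simp: A_def indicator_def)
  also have "\<dots> = (\<integral>\<omega>. max (X \<omega> - p) 0 \<partial>M) + p * measure M A"
    using \<open>integrable M X\<close>
    by (subst Bochner_Integration.integral_add) (auto simp: integrable_real_indicator less_top[symmetric])
  finally show ?thesis
    unfolding cond_exp_event_def A_def by simp
qed

theorem lemma3:
  fixes M :: "'a measure" and X :: "'a \<Rightarrow> real" and Xs :: "nat \<Rightarrow> 'a \<Rightarrow> real"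
    and H :: "'a \<Rightarrow> nat" and p :: real
  assumes "prob_space M"
    and X_rv: "X \<in> borel_measurable M"
    and X_ac: "absolutely_continuous lborel (distr M borel X)"
    and X_nonneg: "AE \<omega> in M. X \<omega> \<ge> 0"
    and X_int: "integrable M X"
    and H_hor: "horizon M H"
    and Xs_rv: "\<And>i. Xs i \<in> borel_measurable M"
    and Xs_ident: "\<And>i. distr M borel (Xs i) = distr M borel X"
    and indep: "prob_space.indep_vars M (\<lambda>_. borel)
                  (\<lambda>j \<omega>. case j of None \<Rightarrow> real (H \<omega>) | Some i \<Rightarrow> Xs i \<omega>) UNIV"
    and p_pos: "p > 0"
    and p_prob: "measure M {\<omega> \<in> space M. X \<omega> \<ge> p} = 1 / (\<integral>\<omega>. real (H \<omega>) \<partial>M)"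
  shows "(\<integral>\<omega>. Max ((\<lambda>i. Xs i \<omega>) ` {1..H \<omega>}) \<partial>M)
           \<le> cond_exp_event M X {\<omega> \<in> space M. X \<omega> \<ge> p}"
proof -
  \<comment> \<open>Absolute continuity and nonnegativity of X only guarantee that a p with P(X \<ge> p) = 1/\<mu>
    exists; the bound holds for every such p.\<close>
  interpret prob_space M by fact
  have H_meas: "H \<in> measurable M (count_space UNIV)" and H_pos: "AE \<omega> in M. H \<omega> \<ge> 1"
    and H_int: "integrable M (\<lambda>\<omega>. real (H \<omega>))"
    using H_hor by (auto simp: horizon_def)
  define \<mu> where "\<mu> = (\<integral>\<omega>. real (H \<omega>) \<partial>M)"
  define e where "e = (\<integral>\<omega>. max (X \<omega> - p) 0 \<partial>M)"
  have "(\<integral>\<omega>. 1 \<partial>M) \<le> \<mu>"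
    unfolding \<mu>_def by (rule integral_mono_AE) (use H_int H_pos in auto)
  then have "1 \<le> \<mu>"
    by (simp add: prob_space)
  have "0 \<le> e"
    unfolding e_def by (rule integral_nonneg_AE) auto
  have "(\<integral>\<^sup>+\<omega>. max (X \<omega> - p) 0 \<partial>M) = ennreal e"
    unfolding e_def using X_int by (intro nn_integral_eq_integral) auto
  then have excess: "(\<integral>\<^sup>+\<omega>. max (Xs i \<omega> - p) 0 \<partial>M) = ennreal e" for i
    using nn_integral_comp_distr_eq[OF X_rv Xs_rv Xs_ident, of "\<lambda>x. ennreal (max (x - p) 0)"] by simp
  have "(\<integral>\<omega>. Max ((\<lambda>i. Xs i \<omega>) ` {1..H \<omega>}) \<partial>M) \<le> p + e * \<mu>"
    unfolding \<mu>_def using p_pos \<open>0 \<le> e\<close>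
    by (intro integral_Max_random_le[OF indep H_meas Xs_rv H_pos H_int excess]) auto
  also have "p + e * \<mu> = cond_exp_event M X {\<omega> \<in> space M. X \<omega> \<ge> p}"
    using \<open>1 \<le> \<mu>\<close> by (simp add: cond_exp_event_ge_eq[OF X_rv X_int] p_prob field_simps
      flip: \<mu>_def e_def)
  finally show ?thesis .
qed

end
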